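(* Let $S\subseteq\{0,1\}^n$, $1\le m\le n$, $f\in[0,1/2]$, and $h\in_R\mathcal{H}^f_{m\times n}$. Then $$|S|\le\min\left\{z\ \middle|\ \frac{1}{1+2^{2m}v(z)/z^2}>\Pr[S(h)\ge1]\right\},$$ where $z$ ranges over integers $1\le z\le 2^n$ and the minimum of the empty set is $+\infty$.
   Context: $h\in_R\mathcal{H}^f_{m\times n}$ means $h(x)=Ax+b\bmod 2$ with $A\in\{0,1\}^{m\times n}$ having i.i.d. entries with $\Pr[A_{ij}=1]=f$ and $b\in\{0,1\}^m$ uniform and independent of $A$; $S(h)=|\{x\in S:h(x)=0\}|$. For integer $1\le q\le 2^n+1$: $w^*(n,q)=\max\{w\ge0:\sum_{j=1}^w\binom{n}{j}\le q-1\}$, $r(n,q)=q-1-\sum_{w=1}^{w^*(n,q)}\binom{n}{w}$, $$(q-1)\,\epsilon(n,m,q,f)=\sum_{w=1}^{w^*(n,q)}\binom{n}{w}\frac{(1+(1-2f)^w)^m}{2^m}+\frac{r(n,q)}{2^m}(1+(1-2f)^{w^*(n,q)+1})^m,$$ and $v(q)=\frac{q}{2^m}\left(1+\epsilon(n,m,q,f)(q-1)-\frac{q}{2^m}\right)$. *)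

theory Defs
  imports "HOL-Probability.Probability"
begin

text \<open>Bit vectors in {0,1}^n are functions nat => bool vanishing outside {..<n}
 (True = 1). A matrix A in {0,1}^(m x n) is a function on index pairs (i,j),
 i<m, j<n; b in {0,1}^m is a function on {..<m}.\<close>

definition bitvecs :: "nat \<Rightarrow> (nat \<Rightarrow> bool) set" where
  "bitvecs n = {x. \<forall>i. n \<le> i \<longrightarrow> \<not> x i}"

text \<open>Coordinate i of h(x) = Ax + b mod 2 (True = 1).\<close>
definition hval :: "nat \<Rightarrow> (nat \<times> nat \<Rightarrow> bool) \<Rightarrow> (nat \<Rightarrow> bool) \<Rightarrow> (nat \<Rightarrow> bool) \<Rightarrow> nat \<Rightarrow> bool" where
  "hval n A b x i = (odd (card {j. j < n \<and> A (i, j) \<and> x j}) \<noteq> b i)"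

definition hcount :: "nat \<Rightarrow> nat \<Rightarrow> (nat \<Rightarrow> bool) set \<Rightarrow> (nat \<times> nat \<Rightarrow> bool) \<Rightarrow> (nat \<Rightarrow> bool) \<Rightarrow> nat" where
  "hcount m n S A b = card {x \<in> S. \<forall>i<m. \<not> hval n A b x i}"

text \<open>The distribution of (A,b) for h in_R H^f_{m x n}: entries of A i.i.d.
 Bernoulli(f), b uniform and independent of A.\<close>
definition hash_dist :: "nat \<Rightarrow> nat \<Rightarrow> real \<Rightarrow> ((nat \<times> nat \<Rightarrow> bool) \<times> (nat \<Rightarrow> bool)) pmf" where
  "hash_dist m n f = pair_pmf (Pi_pmf ({..<m} \<times> {..<n}) False (\<lambda>_. bernoulli_pmf f))
                              (Pi_pmf {..<m} False (\<lambda>_. bernoulli_pmf (1/2)))"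

definition wstar :: "nat \<Rightarrow> nat \<Rightarrow> nat" where
  "wstar n q = Max {w. w \<le> n \<and> (\<Sum>j=1..w. n choose j) \<le> q - 1}"

definition rr :: "nat \<Rightarrow> nat \<Rightarrow> nat" where
  "rr n q = q - 1 - (\<Sum>w=1..wstar n q. n choose w)"

definition eps :: "nat \<Rightarrow> nat \<Rightarrow> nat \<Rightarrow> real \<Rightarrow> real" where
  "eps n m q f =
     ((\<Sum>w=1..wstar n q. real (n choose w) * (1 + (1 - 2*f)^w)^m / 2^m)
      + real (rr n q) / 2^m * (1 + (1 - 2*f)^(wstar n q + 1))^m) / (real q - 1)"

definition vv :: "nat \<Rightarrow> nat \<Rightarrow> real \<Rightarrow> nat \<Rightarrow> real" where
  "vv n m f q = real q / 2^m * (1 + eps n m q f * (real q - 1) - real q / 2^m)"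

end

theory Submission
  imports Defs
begin

text \<open>Let \<open>X = S(h)\<close>. A point of \<open>S\<close> hashes to \<open>0\<close> with probability \<open>2\<^sup>-\<^sup>m\<close>, and two points at
  Hamming distance \<open>w\<close> both do so with probability \<open>2\<^sup>-\<^sup>m ((1 + (1 - 2f)\<^sup>w) / 2)\<^sup>m\<close>: given \<open>A\<close>, the
  offset \<open>b\<close> fits both iff every row of \<open>A\<close> has even inner product with \<open>x + y\<close>. Since at most
  \<open>n choose w\<close> points lie at distance \<open>w\<close> from a given one, this gives
  \<open>E[X\<^sup>2] \<le> E[X] (1 + \<epsilon> (q - 1))\<close> for \<open>q = |S|\<close>, and the second moment method
  \<open>Pr[X \<ge> 1] \<ge> E[X]\<^sup>2 / E[X\<^sup>2]\<close> turns this into \<open>Pr[X \<ge> 1] \<ge> 1 / (1 + 2\<^sup>2\<^sup>m v(q) / q\<^sup>2)\<close>.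
  Applied to a \<open>z\<close>-element subset of \<open>S\<close>, this contradicts the defining inequality of \<open>z\<close>
  unless \<open>|S| \<le> z\<close>.\<close>

lemma measure_bind_pmf:
  "measure_pmf.prob (bind_pmf M N) X = measure_pmf.expectation M (\<lambda>x. measure_pmf.prob (N x) X)"
proof -
  have "integrable (measure_pmf M) (\<lambda>x. measure_pmf.prob (N x) X)"
    by (rule measure_pmf.integrable_const_bound[where B = 1]) auto
  then have "ennreal (measure_pmf.expectation M (\<lambda>x. measure_pmf.prob (N x) X))
      = (\<integral>\<^sup>+x. ennreal (measure_pmf.prob (N x) X) \<partial>M)"
    by (intro nn_integral_eq_integral[symmetric]) auto
  also have "\<dots> = ennreal (measure_pmf.prob (bind_pmf M N) X)"
    by (simp add: measure_pmf.emeasure_eq_measure[symmetric])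
  finally show ?thesis
    by (subst (asm) ennreal_inj) (auto intro: Bochner_Integration.integral_nonneg)
qed

lemma Pi_pmf_Times:
  assumes "finite I" "finite J"
  shows "Pi_pmf (I \<times> J) d (\<lambda>_. p) = map_pmf case_prod (Pi_pmf I (\<lambda>_. d) (\<lambda>_. Pi_pmf J d (\<lambda>_. p)))"
    (is "_ = map_pmf case_prod ?rows")
proof (rule pmf_eqI)
  fix G :: "'a \<times> 'b \<Rightarrow> 'c"
  have "pmf (Pi_pmf (I \<times> J) d (\<lambda>_. p)) G = pmf ?rows (curry G)"
    using assms by (auto simp: pmf_Pi prod.cartesian_product fun_eq_iff prod_zero_iff)
  also have "inj (case_prod :: ('a \<Rightarrow> 'b \<Rightarrow> 'c) \<Rightarrow> _)"
    by (intro injI) (auto simp: fun_eq_iff)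
  then have "pmf ?rows (curry G) = pmf (map_pmf case_prod ?rows) G"
    by (metis case_prod_curry pmf_map_inj')
  finally show "pmf (Pi_pmf (I \<times> J) d (\<lambda>_. p)) G = pmf (map_pmf case_prod ?rows) G" .
qed

lemma prob_even_card_Pi_bernoulli:
  fixes f :: real
  assumes "finite D" "0 \<le> f" "f \<le> 1"
  shows "measure_pmf.prob (Pi_pmf D False (\<lambda>_. bernoulli_pmf f)) {r. even (card {j\<in>D. r j})}
         = (1 + (1 - 2*f) ^ card D) / 2"
  using assms(1)
proof (induction D rule: finite_induct)
  case (insert x D)
  let ?P = "Pi_pmf D False (\<lambda>_. bernoulli_pmf f)"
  let ?even = "{r. even (card {j\<in>D. r j})}"
  let ?E = "{r. even (card {j\<in>insert x D. r j})}"
  have card_upd: "card {j\<in>insert x D. (r(x := y)) j} = (if y then Suc (card {j\<in>D. r j}) else card {j\<in>D. r j})"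
    for r y
  proof -
    have "{j\<in>insert x D. (r(x := y)) j} = (if y then insert x {j\<in>D. r j} else {j\<in>D. r j})"
      using insert.hyps by auto
    then show ?thesis
      using insert.hyps by auto
  qed
  have upd: "(\<lambda>r. r(x := True)) -` ?E = - ?even" "(\<lambda>r. r(x := False)) -` ?E = ?even"
    using card_upd by (auto intro!: set_eqI)
  have "measure_pmf.prob (Pi_pmf (insert x D) False (\<lambda>_. bernoulli_pmf f)) ?E
      = measure_pmf.expectation (bernoulli_pmf f) (\<lambda>y. measure_pmf.prob (map_pmf (\<lambda>r. r(x := y)) ?P) ?E)"
    using insert.hyps
    by (simp add: Pi_pmf_insert' map_pmf_def measure_bind_pmf del: measure_map_pmf)
  also have "\<dots> = f * measure_pmf.prob ?P (- ?even) + (1 - f) * measure_pmf.prob ?P ?even"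
    using assms by (simp only: integral_bernoulli_pmf measure_map_pmf upd) simp
  also have "measure_pmf.prob ?P (- ?even) = 1 - measure_pmf.prob ?P ?even"
    using measure_pmf.prob_compl[of ?even ?P] by (simp add: Compl_eq_Diff_UNIV)
  also have "f * (1 - measure_pmf.prob ?P ?even) + (1 - f) * measure_pmf.prob ?P ?even
      = (1 + (1 - 2*f) ^ card (insert x D)) / 2"
    using insert.hyps insert.IH by (simp add: algebra_simps)
  finally show ?case .
qed simp

lemma prob_even_card_Pi_bernoulli_subset:
  fixes f :: real
  assumes "finite J" "D \<subseteq> J" "0 \<le> f" "f \<le> 1"
  shows "measure_pmf.prob (Pi_pmf J False (\<lambda>_. bernoulli_pmf f)) {r. even (card {j\<in>D. r j})}
         = (1 + (1 - 2*f) ^ card D) / 2"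
proof -
  have "Pi_pmf D False (\<lambda>_. bernoulli_pmf f)
      = map_pmf (\<lambda>r x. if x \<in> D then r x else False) (Pi_pmf J False (\<lambda>_. bernoulli_pmf f))"
    using assms by (intro Pi_pmf_subset) auto
  moreover have "(\<lambda>r x. if x \<in> D then r x else False) -` {r. even (card {j\<in>D. r j})}
      = {r. even (card {j\<in>D. r j})}"
    by (simp add: vimage_def cong: conj_cong)
  ultimately show ?thesis
    using prob_even_card_Pi_bernoulli[of D f] assms finite_subset by fastforce
qed

lemma prob_rows_even_card_Pi_bernoulli:
  fixes f :: real
  assumes "finite I" "finite J" "D \<subseteq> J" "0 \<le> f" "f \<le> 1"
  shows "measure_pmf.prob (Pi_pmf (I \<times> J) False (\<lambda>_. bernoulli_pmf f))
           {A. \<forall>i\<in>I. even (card {j\<in>D. A (i, j)})} = ((1 + (1 - 2*f) ^ card D) / 2) ^ card I"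
proof -
  let ?R = "Pi_pmf J False (\<lambda>_. bernoulli_pmf f)"
  have "case_prod -` {A. \<forall>i\<in>I. even (card {j\<in>D. A (i, j)})} = Pi I (\<lambda>_. {r. even (card {j\<in>D. r j})})"
    by (auto simp: Pi_def)
  then have "measure_pmf.prob (Pi_pmf (I \<times> J) False (\<lambda>_. bernoulli_pmf f))
           {A. \<forall>i\<in>I. even (card {j\<in>D. A (i, j)})}
      = measure_pmf.prob (Pi_pmf I (\<lambda>_. False) (\<lambda>_. ?R)) (Pi I (\<lambda>_. {r. even (card {j\<in>D. r j})}))"
    using assms by (simp add: Pi_pmf_Times)
  also have "\<dots> = (\<Prod>i\<in>I. measure_pmf.prob ?R {r. even (card {j\<in>D. r j})})"
    using assms by (intro measure_Pi_pmf_Pi)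
  also have "\<dots> = ((1 + (1 - 2*f) ^ card D) / 2) ^ card I"
    using assms by (simp add: prob_even_card_Pi_bernoulli_subset)
  finally show ?thesis .
qed

lemma odd_card_inner_eq_iff:
  assumes "finite U"
  shows "odd (card {j\<in>U. a j \<and> x j}) = odd (card {j\<in>U. a j \<and> y j})
         \<longleftrightarrow> even (card {j\<in>U. x j \<noteq> y j \<and> a j})"
  using assms
proof (induction U rule: finite_induct)
  case (insert u U)
  have split: "{j\<in>insert u U. P j} = (if P u then insert u {j\<in>U. P j} else {j\<in>U. P j})" for P
    by auto
  show ?case
    using insert by (simp only: split) (auto simp: card_insert_if)
qed simp

lemma second_moment_method:
  fixes X :: "'a \<Rightarrow> real"
  assumes fin: "finite (set_pmf M)" and zero_or_ge1: "\<And>w. X w = 0 \<or> 1 \<le> X w"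
  shows "(measure_pmf.expectation M X)\<^sup>2
         \<le> measure_pmf.expectation M (\<lambda>w. (X w)\<^sup>2) * measure_pmf.prob M {w. 1 \<le> X w}"
proof -
  define mu where "mu = measure_pmf.expectation M X"
  define s where "s = measure_pmf.expectation M (\<lambda>w. (X w)\<^sup>2)"
  define P where "P = measure_pmf.prob M {w. 1 \<le> X w}"
  \<comment> \<open>Integrate \<open>0 \<le> (X - t [X \<ge> 1])\<^sup>2\<close>, noting \<open>X [X \<ge> 1] = X\<close>.\<close>
  have quadratic: "2*t*mu - t\<^sup>2 * P \<le> s" for t
  proof -
    have "2*t*X w - t\<^sup>2 * indicator {w. 1 \<le> X w} w \<le> (X w)\<^sup>2" for w
    proof (cases "1 \<le> X w")
      case True
      have "0 \<le> (X w - t)\<^sup>2" by simp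
      with True show ?thesis by (simp add: power2_diff algebra_simps)
    next
      case False
      with zero_or_ge1[of w] show ?thesis by simp
    qed
    then have "measure_pmf.expectation M (\<lambda>w. 2*t*X w - t\<^sup>2 * indicator {w. 1 \<le> X w} w) \<le> s"
      unfolding s_def by (intro integral_mono integrable_measure_pmf_finite fin)
    moreover have "measure_pmf.expectation M (\<lambda>w. 2*t*X w - t\<^sup>2 * indicator {w. 1 \<le> X w} w)
        = 2*t*mu - t\<^sup>2 * P"
      unfolding mu_def P_def
      by (subst Bochner_Integration.integral_diff) (auto intro!: integrable_measure_pmf_finite fin)
    ultimately show ?thesis by simp
  qed
  have "0 \<le> mu"
    unfolding mu_def using zero_or_ge1 by (intro Bochner_Integration.integral_nonneg) (smt (verit))
  show ?thesis
  proof (cases "P = 0")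
    case True
    have "mu = 0"
    proof (rule ccontr)
      assume "mu \<noteq> 0"
      then show False
        using quadratic[of "(s + 1) / (2*mu)"] \<open>0 \<le> mu\<close> True by (simp add: field_simps)
    qed
    then show ?thesis by (simp add: mu_def)
  next
    case False
    then have "0 < P" unfolding P_def by (simp add: zero_less_measure_iff)
    have "mu\<^sup>2 / P = 2*(mu/P)*mu - (mu/P)\<^sup>2 * P"
      using \<open>0 < P\<close> by (simp add: field_simps power2_eq_square)
    also have "\<dots> \<le> s" by (rule quadratic)
    finally show ?thesis
      using \<open>0 < P\<close> by (simp add: mu_def s_def P_def field_simps)
  qed
qed

definition hash_zero_event :: "nat \<Rightarrow> nat \<Rightarrow> (nat \<Rightarrow> bool) \<Rightarrow> ((nat \<times> nat \<Rightarrow> bool) \<times> (nat \<Rightarrow> bool)) set" where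
  "hash_zero_event m n x = {(A, b). \<forall>i<m. \<not> hval n A b x i}"

definition hamming :: "nat \<Rightarrow> (nat \<Rightarrow> bool) \<Rightarrow> (nat \<Rightarrow> bool) \<Rightarrow> nat" where
  "hamming n x y = card {j\<in>{..<n}. x j \<noteq> y j}"

definition parity_agree_prob :: "nat \<Rightarrow> real \<Rightarrow> nat \<Rightarrow> real" where
  "parity_agree_prob m f w = ((1 + (1 - 2*f) ^ w) / 2) ^ m"

lemma finite_set_pmf_hash_dist: "finite (set_pmf (hash_dist m n f))"
  by (auto simp: hash_dist_def set_Pi_pmf intro!: finite_PiE_dflt)

lemma prob_hash_zero_pair_given_matrix:
  "measure_pmf.prob (Pi_pmf {..<m} False (\<lambda>_. bernoulli_pmf (1/2)))
     {b. (A, b) \<in> hash_zero_event m n x \<inter> hash_zero_event m n y}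
   = (1/2) ^ m * indicator {A. \<forall>i\<in>{..<m}. even (card {j\<in>{j\<in>{..<n}. x j \<noteq> y j}. A (i, j)})} A"
  (is "_ = _ * indicator ?agree A")
proof -
  let ?par = "\<lambda>z i. odd (card {j\<in>{..<n}. A (i, j) \<and> z j})"
  have coin: "measure_pmf.prob (bernoulli_pmf (1/2)) {\<beta>. \<beta> = a \<and> \<beta> = c} = (if a = c then 1/2 else 0)"
    for a c :: bool
  proof -
    have "{\<beta>. \<beta> = a \<and> \<beta> = c} = (if a = c then {a} else {})" by auto
    then show ?thesis by (cases a) (simp_all add: measure_pmf_single)
  qed
  have agree: "?par x i = ?par y i \<longleftrightarrow> even (card {j\<in>{j\<in>{..<n}. x j \<noteq> y j}. A (i, j)})" for i
    using odd_card_inner_eq_iff[of "{..<n}" "\<lambda>j. A (i, j)" x y] by (simp add: conj_ac)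
  have "{b. (A, b) \<in> hash_zero_event m n x \<inter> hash_zero_event m n y}
      = Pi {..<m} (\<lambda>i. {\<beta>. \<beta> = ?par x i \<and> \<beta> = ?par y i})"
    by (auto simp: hash_zero_event_def hval_def Pi_def)
  then have "measure_pmf.prob (Pi_pmf {..<m} False (\<lambda>_. bernoulli_pmf (1/2)))
      {b. (A, b) \<in> hash_zero_event m n x \<inter> hash_zero_event m n y}
      = (\<Prod>i<m. if ?par x i = ?par y i then 1/2 else 0)"
    by (simp add: measure_Pi_pmf_Pi coin)
  also have "\<dots> = (1/2) ^ m * indicator ?agree A"
  proof (cases "A \<in> ?agree")
    case True
    then have "(\<Prod>i<m. if ?par x i = ?par y i then 1/2 else 0) = (\<Prod>i<m. 1/2 :: real)"
      using agree by (intro prod.cong) auto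
    with True show ?thesis by simp
  next
    case False
    then obtain i where "i < m" "?par x i \<noteq> ?par y i"
      using agree by auto
    with False show ?thesis by (auto simp: prod_zero_iff)
  qed
  finally show ?thesis .
qed

lemma prob_hash_zero_pair:
  fixes f :: real
  assumes "0 \<le> f" "f \<le> 1"
  shows "measure_pmf.prob (hash_dist m n f) (hash_zero_event m n x \<inter> hash_zero_event m n y)
         = (1/2) ^ m * parity_agree_prob m f (hamming n x y)"
proof -
  let ?PA = "Pi_pmf ({..<m} \<times> {..<n}) False (\<lambda>_. bernoulli_pmf f)"
  let ?agree = "{A. \<forall>i\<in>{..<m}. even (card {j\<in>{j\<in>{..<n}. x j \<noteq> y j}. A (i, j)})}"
  have "measure_pmf.prob (hash_dist m n f) (hash_zero_event m n x \<inter> hash_zero_event m n y)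
      = measure_pmf.expectation ?PA (\<lambda>A. (1/2) ^ m * indicator ?agree A)"
    unfolding hash_dist_def pair_pmf_def map_pmf_def[symmetric] measure_bind_pmf measure_map_pmf vimage_def
    by (simp only: prob_hash_zero_pair_given_matrix)
  also have "\<dots> = (1/2) ^ m * measure_pmf.prob ?PA ?agree"
    by simp
  also have "\<dots> = (1/2) ^ m * parity_agree_prob m f (hamming n x y)"
    using assms prob_rows_even_card_Pi_bernoulli[of "{..<m}" "{..<n}" "{j\<in>{..<n}. x j \<noteq> y j}" f]
    by (simp add: parity_agree_prob_def hamming_def subset_iff)
  finally show ?thesis .
qed

lemma prob_hash_zero:
  fixes f :: real
  assumes "0 \<le> f" "f \<le> 1"
  shows "measure_pmf.prob (hash_dist m n f) (hash_zero_event m n x) = (1/2) ^ m"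
  using prob_hash_zero_pair[OF assms, of m n x x] by (simp add: parity_agree_prob_def hamming_def)

lemma hcount_eq_sum_indicator:
  assumes "finite S"
  shows "real (hcount m n S A b) = (\<Sum>x\<in>S. indicator (hash_zero_event m n x) (A, b))"
  using assms by (simp add: hcount_def hash_zero_event_def indicator_def sum.If_cases Int_def conj_commute)

lemma expectation_hcount:
  fixes f :: real
  assumes "finite S" "0 \<le> f" "f \<le> 1"
  shows "measure_pmf.expectation (hash_dist m n f) (\<lambda>(A, b). real (hcount m n S A b)) = card S / 2 ^ m"
proof -
  have "measure_pmf.expectation (hash_dist m n f) (\<lambda>(A, b). real (hcount m n S A b))
      = (\<Sum>x\<in>S. measure_pmf.prob (hash_dist m n f) (hash_zero_event m n x))"
    using assms(1) finite_set_pmf_hash_dist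
    by (simp add: hcount_eq_sum_indicator case_prod_unfold Bochner_Integration.integral_sum
        integrable_measure_pmf_finite)
  also have "\<dots> = card S / 2 ^ m"
    using prob_hash_zero[OF assms(2,3)] by (simp add: power_one_over)
  finally show ?thesis .
qed

lemma expectation_hcount_sq:
  fixes f :: real
  assumes "finite S" "0 \<le> f" "f \<le> 1"
  shows "measure_pmf.expectation (hash_dist m n f) (\<lambda>(A, b). (real (hcount m n S A b))\<^sup>2)
         = (\<Sum>x\<in>S. \<Sum>y\<in>S. parity_agree_prob m f (hamming n x y)) / 2 ^ m"
proof -
  have "(\<lambda>(A, b). (real (hcount m n S A b))\<^sup>2)
      = (\<lambda>w. \<Sum>x\<in>S. \<Sum>y\<in>S. indicator (hash_zero_event m n x \<inter> hash_zero_event m n y) w)"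
    using assms(1)
    by (auto simp: fun_eq_iff hcount_eq_sum_indicator power2_eq_square sum_product indicator_inter_arith)
  then have "measure_pmf.expectation (hash_dist m n f) (\<lambda>(A, b). (real (hcount m n S A b))\<^sup>2)
      = (\<Sum>x\<in>S. \<Sum>y\<in>S. measure_pmf.prob (hash_dist m n f) (hash_zero_event m n x \<inter> hash_zero_event m n y))"
    using finite_set_pmf_hash_dist
    by (simp add: Bochner_Integration.integral_sum integrable_measure_pmf_finite)
  then show ?thesis
    using assms(2,3) by (simp add: prob_hash_zero_pair sum_divide_distrib power_one_over)
qed

lemma card_hamming_sphere_le:
  assumes "T \<subseteq> bitvecs n"
  shows "card {y\<in>T. hamming n x y = w} \<le> n choose w"
proof -
  let ?diff = "\<lambda>y. {j\<in>{..<n}. x j \<noteq> y j}"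
  have "inj_on ?diff T"
  proof (rule inj_onI)
    fix y z assume yz: "y \<in> T" "z \<in> T" "?diff y = ?diff z"
    show "y = z"
    proof
      fix j
      show "y j = z j"
      proof (cases "j < n")
        case True
        then show ?thesis using yz(3) by (auto simp: set_eq_iff)
      next
        case False
        then show ?thesis using yz(1,2) assms by (auto simp: bitvecs_def)
      qed
    qed
  qed
  then have "inj_on ?diff {y\<in>T. hamming n x y = w}"
    by (rule inj_on_subset) auto
  moreover have "?diff ` {y\<in>T. hamming n x y = w} \<subseteq> {B. B \<subseteq> {..<n} \<and> card B = w}"
    by (auto simp: hamming_def)
  ultimately have "card {y\<in>T. hamming n x y = w} \<le> card {B. B \<subseteq> {..<n} \<and> card B = w}"
    by (intro card_inj_on_le) auto
  also have "\<dots> = n choose w"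
    by (simp add: n_subsets)
  finally show ?thesis .
qed

lemma hamming_pos:
  assumes "x \<in> bitvecs n" "y \<in> bitvecs n" "x \<noteq> y"
  shows "0 < hamming n x y"
proof -
  obtain j where j: "x j \<noteq> y j"
    using assms(3) by auto
  then have "j < n"
    using assms(1,2) unfolding bitvecs_def by (metis mem_Collect_eq not_le)
  with j have "{j\<in>{..<n}. x j \<noteq> y j} \<noteq> {}"
    by auto
  then show ?thesis
    by (simp add: hamming_def card_gt_0_iff)
qed

text \<open>At most \<open>n choose w\<close> points of \<open>T\<close> lie at distance \<open>w\<close> from \<open>x\<close>, so for an antitone
  weight the sum is largest when \<open>T\<close> fills the spheres around \<open>x\<close> of radius \<open>1, \<dots>, W\<close>
  and the remaining points sit at distance \<open>W + 1\<close>.\<close>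

lemma sum_antimono_hamming_le:
  fixes g :: "nat \<Rightarrow> real"
  assumes g: "antimono g" and T: "T \<subseteq> bitvecs n" "finite T" and x: "x \<in> bitvecs n" "x \<notin> T"
    and W: "(\<Sum>j=1..W. n choose j) \<le> card T"
  shows "(\<Sum>y\<in>T. g (hamming n x y))
         \<le> (\<Sum>w=1..W. real (n choose w) * g w) + real (card T - (\<Sum>j=1..W. n choose j)) * g (W + 1)"
proof -
  define G where "G = g (W + 1)"
  define T1 where "T1 = {y\<in>T. hamming n x y \<le> W}"
  have dist_pos: "1 \<le> hamming n x y" if "y \<in> T" for y
    using that T(1) x hamming_pos[of x n y] by (metis Suc_leI One_nat_def subsetD)
  have "(\<Sum>y\<in>T. g (hamming n x y) - G) = (\<Sum>y\<in>T - T1. g (hamming n x y) - G) + (\<Sum>y\<in>T1. g (hamming n x y) - G)"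
    using T by (intro sum.subset_diff) (auto simp: T1_def)
  also have "(\<Sum>y\<in>T - T1. g (hamming n x y) - G) \<le> 0"
    using g by (intro sum_nonpos) (auto simp: T1_def G_def antimonoD)
  also have "(\<Sum>y\<in>T1. g (hamming n x y) - G) = (\<Sum>w=1..W. \<Sum>y\<in>{y\<in>T1. hamming n x y = w}. g (hamming n x y) - G)"
    using T dist_pos by (intro sum.group[symmetric]) (auto simp: T1_def)
  also have "\<dots> = (\<Sum>w=1..W. real (card {y\<in>T1. hamming n x y = w}) * (g w - G))"
    by simp
  also have "\<dots> \<le> (\<Sum>w=1..W. real (n choose w) * (g w - G))"
  proof (rule sum_mono)
    fix w assume "w \<in> {1..W}"
    then have "0 \<le> g w - G"
      using g by (simp add: G_def antimonoD)
    moreover have "card {y\<in>T1. hamming n x y = w} \<le> n choose w"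
      using T by (intro card_hamming_sphere_le) (auto simp: T1_def)
    ultimately show "real (card {y\<in>T1. hamming n x y = w}) * (g w - G) \<le> real (n choose w) * (g w - G)"
      by (intro mult_right_mono) auto
  qed
  finally have "(\<Sum>y\<in>T. g (hamming n x y)) \<le> (\<Sum>w=1..W. real (n choose w) * (g w - G)) + real (card T) * G"
    by (simp add: sum_subtractf)
  also have "\<dots> = (\<Sum>w=1..W. real (n choose w) * g w) + real (card T - (\<Sum>j=1..W. n choose j)) * G"
    using W by (simp add: of_nat_diff algebra_simps sum_subtractf sum_distrib_left)
  finally show ?thesis
    unfolding G_def .
qed

lemma antimono_parity_agree_prob:
  fixes f :: real
  assumes "0 \<le> f" "f \<le> 1/2"
  shows "antimono (parity_agree_prob m f)"
proof (rule antimonoI)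
  fix v w :: nat assume "v \<le> w"
  then have "(1 - 2*f) ^ w \<le> (1 - 2*f) ^ v"
    using assms by (intro power_decreasing) auto
  then show "parity_agree_prob m f w \<le> parity_agree_prob m f v"
    unfolding parity_agree_prob_def using assms by (intro power_mono) auto
qed

lemma sum_choose_wstar_le: "(\<Sum>j=1..wstar n q. n choose j) \<le> q - 1"
proof -
  have "finite {w. w \<le> n \<and> (\<Sum>j=1..w. n choose j) \<le> q - 1}"
    by simp
  moreover have "0 \<in> {w. w \<le> n \<and> (\<Sum>j=1..w. n choose j) \<le> q - 1}"
    by simp
  ultimately show ?thesis
    unfolding wstar_def using Max_in by blast
qed

lemma eps_mult_eq:
  assumes "q \<noteq> 1"
  shows "eps n m q f * (real q - 1) =
     (\<Sum>w=1..wstar n q. real (n choose w) * parity_agree_prob m f w)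
     + real (rr n q) * parity_agree_prob m f (wstar n q + 1)"
  using assms by (simp add: eps_def parity_agree_prob_def power_divide sum_divide_distrib)

lemma sum_parity_agree_prob_le_eps:
  fixes f :: real
  assumes S: "S \<subseteq> bitvecs n" "finite S" "x \<in> S" and f: "0 \<le> f" "f \<le> 1/2"
  shows "(\<Sum>y\<in>S - {x}. parity_agree_prob m f (hamming n x y)) \<le> eps n m (card S) f * (real (card S) - 1)"
proof (cases "card S = 1")
  case True
  then have "S - {x} = {}"
    using S by (auto simp: card_1_singleton_iff)
  then show ?thesis
    by (simp only: sum.empty) (simp add: True)
next
  case False
  have card: "card (S - {x}) = card S - 1"
    using S by simp
  have "(\<Sum>y\<in>S - {x}. parity_agree_prob m f (hamming n x y))
      \<le> (\<Sum>w=1..wstar n (card S). real (n choose w) * parity_agree_prob m f w)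
         + real (rr n (card S)) * parity_agree_prob m f (wstar n (card S) + 1)"
    using antimono_parity_agree_prob[OF f] S sum_choose_wstar_le[of n "card S"]
      sum_antimono_hamming_le[of "parity_agree_prob m f" "S - {x}" n x "wstar n (card S)"]
    by (auto simp: card rr_def)
  also have "\<dots> = eps n m (card S) f * (real (card S) - 1)"
    using False by (simp add: eps_mult_eq)
  finally show ?thesis .
qed

lemma expectation_hcount_sq_le:
  fixes f :: real
  assumes S: "S \<subseteq> bitvecs n" "finite S" and f: "0 \<le> f" "f \<le> 1/2"
  shows "measure_pmf.expectation (hash_dist m n f) (\<lambda>(A, b). (real (hcount m n S A b))\<^sup>2)
         \<le> card S / 2 ^ m * (1 + eps n m (card S) f * (real (card S) - 1))"
proof -
  let ?e = "eps n m (card S) f * (real (card S) - 1)"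
  have "(\<Sum>y\<in>S. parity_agree_prob m f (hamming n x y)) \<le> 1 + ?e" if "x \<in> S" for x
  proof -
    have "(\<Sum>y\<in>S. parity_agree_prob m f (hamming n x y))
        = 1 + (\<Sum>y\<in>S - {x}. parity_agree_prob m f (hamming n x y))"
      using S that by (simp add: sum.remove parity_agree_prob_def hamming_def)
    also have "\<dots> \<le> 1 + ?e"
      using S that f by (simp add: sum_parity_agree_prob_le_eps)
    finally show ?thesis .
  qed
  then have "(\<Sum>x\<in>S. \<Sum>y\<in>S. parity_agree_prob m f (hamming n x y)) \<le> card S * (1 + ?e)"
    using sum_mono[of S _ "\<lambda>_. 1 + ?e"] by simp
  then show ?thesis
    using S f by (simp add: expectation_hcount_sq divide_right_mono)
qed

lemma vv_ratio_eq:
  assumes "0 < z"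
  shows "1 + 2^(2*m) * vv n m f z / (real z)\<^sup>2 = 2 ^ m * (1 + eps n m z f * (real z - 1)) / real z"
  using assms by (simp add: vv_def power_mult field_simps power2_eq_square)

lemma prob_hcount_pos_ge:
  fixes f :: real
  assumes S: "S \<subseteq> bitvecs n" "finite S" "S \<noteq> {}" and f: "0 \<le> f" "f \<le> 1/2"
  shows "1 / (1 + 2^(2*m) * vv n m f (card S) / (real (card S))\<^sup>2)
         \<le> measure_pmf.prob (hash_dist m n f) {(A, b). hcount m n S A b \<ge> 1}"
proof -
  define z where "z = real (card S)"
  define mu where "mu = z / 2 ^ m"
  define e where "e = eps n m (card S) f * (z - 1)"
  define s where "s = measure_pmf.expectation (hash_dist m n f) (\<lambda>(A, b). (real (hcount m n S A b))\<^sup>2)"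
  define P where "P = measure_pmf.prob (hash_dist m n f) {(A, b). hcount m n S A b \<ge> 1}"
  have "0 < z" "0 < mu"
    using S by (simp_all add: z_def mu_def card_gt_0_iff)
  have "(measure_pmf.expectation (hash_dist m n f) (\<lambda>(A, b). real (hcount m n S A b)))\<^sup>2
      \<le> measure_pmf.expectation (hash_dist m n f) (\<lambda>w. ((\<lambda>(A, b). real (hcount m n S A b)) w)\<^sup>2)
        * measure_pmf.prob (hash_dist m n f) {w. 1 \<le> (\<lambda>(A, b). real (hcount m n S A b)) w}"
    by (rule second_moment_method[OF finite_set_pmf_hash_dist]) auto
  moreover have "(\<lambda>w. ((\<lambda>(A, b). real (hcount m n S A b)) w)\<^sup>2) = (\<lambda>(A, b). (real (hcount m n S A b))\<^sup>2)"
    by (simp add: fun_eq_iff split: prod.split)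
  moreover have "{w. 1 \<le> (\<lambda>(A, b). real (hcount m n S A b)) w} = {(A, b). hcount m n S A b \<ge> 1}"
    by auto
  ultimately have "mu\<^sup>2 \<le> s * P"
    using expectation_hcount[OF S(2) f(1)] f by (simp add: mu_def z_def s_def P_def)
  also have "\<dots> \<le> mu * (1 + e) * P"
    using expectation_hcount_sq_le[OF S(1,2) f]
    by (intro mult_right_mono) (simp_all add: s_def mu_def e_def z_def P_def)
  finally have "mu \<le> (1 + e) * P"
    using \<open>0 < mu\<close> by (metis mult.assoc mult_le_cancel_left_pos power2_eq_square)
  moreover have "0 \<le> P"
    by (simp add: P_def)
  ultimately have "0 < 1 + e"
    using \<open>0 < mu\<close> by (smt (verit) mult_nonpos_nonneg)
  with \<open>mu \<le> (1 + e) * P\<close> have "mu / (1 + e) \<le> P"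
    by (simp add: pos_divide_le_eq mult.commute)
  moreover have "1 + 2^(2*m) * vv n m f (card S) / z\<^sup>2 = (1 + e) / mu"
    using \<open>0 < z\<close> by (simp add: vv_ratio_eq e_def mu_def z_def)
  ultimately show ?thesis
    by (simp add: P_def z_def)
qed

lemma prob_hcount_pos_mono:
  assumes "S' \<subseteq> S" "finite S"
  shows "measure_pmf.prob (hash_dist m n f) {(A, b). hcount m n S' A b \<ge> 1}
         \<le> measure_pmf.prob (hash_dist m n f) {(A, b). hcount m n S A b \<ge> 1}"
proof -
  have "hcount m n S' A b \<le> hcount m n S A b" for A b
    unfolding hcount_def using assms by (intro card_mono) auto
  then show ?thesis
    by (intro measure_pmf.finite_measure_mono) (auto intro: order_trans)
qed

lemma finite_bitvecs: "finite (bitvecs n)"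
proof (rule finite_subset)
  show "bitvecs n \<subseteq> (\<lambda>B i. i \<in> B) ` Pow {..<n}"
  proof
    fix x assume "x \<in> bitvecs n"
    then have "x = (\<lambda>i. i \<in> {i. i < n \<and> x i})"
      unfolding bitvecs_def by (metis mem_Collect_eq not_le)
    then show "x \<in> (\<lambda>B i. i \<in> B) ` Pow {..<n}"
      by blast
  qed
qed simp

theorem lemma3:
  fixes S :: "(nat \<Rightarrow> bool) set" and m n :: nat and f :: real
  assumes "S \<subseteq> bitvecs n" and "1 \<le> m" and "m \<le> n"
    and "0 \<le> f" and "f \<le> 1/2"
  shows "enat (card S) \<le>
    (INF z \<in> {z::nat. 1 \<le> z \<and> z \<le> 2^n \<and>
        1 / (1 + 2^(2*m) * vv n m f z / (real z)^2)
          > measure_pmf.prob (hash_dist m n f) {(A, b). hcount m n S A b \<ge> 1}}. enat z)"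
proof (rule INF_greatest)
  fix z assume z: "z \<in> {z::nat. 1 \<le> z \<and> z \<le> 2^n \<and>
        1 / (1 + 2^(2*m) * vv n m f z / (real z)^2)
          > measure_pmf.prob (hash_dist m n f) {(A, b). hcount m n S A b \<ge> 1}}"
  have "finite S"
    using assms(1) finite_bitvecs finite_subset by blast
  show "enat (card S) \<le> enat z"
  proof (rule ccontr)
    assume "\<not> enat (card S) \<le> enat z"
    then obtain S' where S': "S' \<subseteq> S" "card S' = z"
      by (metis enat_ord_simps(1) nle_le obtain_subset_with_card_n)
    then have "1 / (1 + 2^(2*m) * vv n m f z / (real z)^2)
        \<le> measure_pmf.prob (hash_dist m n f) {(A, b). hcount m n S' A b \<ge> 1}"
      using prob_hcount_pos_ge[of S' n f m] assms z \<open>finite S\<close> finite_subset by fastforce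
    also have "\<dots> \<le> measure_pmf.prob (hash_dist m n f) {(A, b). hcount m n S A b \<ge> 1}"
      using S'(1) \<open>finite S\<close> by (rule prob_hcount_pos_mono)
    finally show False
      using z by simp
  qed
qed

end
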